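(* Let $G=(V,E,w)$ be a finite undirected graph with positive vertex weights and $v\in V$, and run the confinement procedure from $v$ (with any choice of extending children at each step). (a) If $v$ is unconfined, then $v$ is sheathed (there is an MWIS of $G$ not containing $v$), and $\alpha_w(G[V\setminus\{v\}])=\alpha_w(G)$. (b) If $v$ is confined with confining set $S_v$, then either $v$ is sheathed or $S_v$ is contained in every MWIS of $G$. Moreover, if some $u\in S_v$ is also confined, with confining set $S_u$, and $v\in S_u$, then $\{u,v\}$ is a simultaneous set.
   Context: $G=(V,E,w)$: finite simple undirected graph, $w:V\to\mathbb{R}^{+}$, $w(S)=\sum_{x\in S}w(x)$. MWIS = maximum weight independent set; MWVC = minimum weight vertex cover. $N(S)=(\bigcup_{x\in S}N(x))\setminus S$, $N[S]=N(S)\cup S$; $G[S]$ is the induced subgraph, $\alpha_w(G[S])$ the maximum weight of an independent set of $G[S]$ ($0$ if $S=\emptyset$). A vertex is sheathed if it lies in some MWVC (equivalently, some MWIS avoids it). A set $X$ is a simultaneous set if either $X$ is contained in some MWIS or $X$ is contained in some MWVC. Child / extending child: for an independent set $S$, a vertex $u\in N(S)$ with $w(u)\ge w(S\cap N(u))$ is a child of $S$; a child $u$ is an extending child if there is exactly one independent set $S^*\subseteq N(u)\setminus N[S]$ with $w(u)<w(S\cap N(u))+w(S^* )$, and this $S^*$ is called a satellite set of $S$. Confinement procedure from $v$: start with $S:=\{v\}$ and repeat: (i) while $S$ has an extending child, add its satellite set to $S$; (ii) if some child $u$ of $S$ satisfies $w(u)\ge w(S\cap N(u))+\alpha_w(G[N(u)\setminus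 N[S]])$, halt and call $v$ unconfined; (iii) if no child of $S$ is an extending child, halt, call $v$ confined and call $S_v:=S$ its confining set. *)

theory Defs
  imports Complex_Main
begin

definition wgraph :: "'a set \<Rightarrow> ('a \<Rightarrow> 'a \<Rightarrow> bool) \<Rightarrow> ('a \<Rightarrow> real) \<Rightarrow> bool" where
  "wgraph V E w \<longleftrightarrow> finite V \<and> (\<forall>x y. E x y \<longrightarrow> x \<in> V \<and> y \<in> V)
     \<and> (\<forall>x y. E x y \<longrightarrow> E y x) \<and> (\<forall>x. \<not> E x x) \<and> (\<forall>x\<in>V. 0 < w x)"

definition nbr :: "('a \<Rightarrow> 'a \<Rightarrow> bool) \<Rightarrow> 'a \<Rightarrow> 'a set" where
  "nbr E x = {y. E x y}"

definition nbhd :: "('a \<Rightarrow> 'a \<Rightarrow> bool) \<Rightarrow> 'a set \<Rightarrow> 'a set" where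
  "nbhd E S = (\<Union>x\<in>S. nbr E x) - S"

definition cnbhd :: "('a \<Rightarrow> 'a \<Rightarrow> bool) \<Rightarrow> 'a set \<Rightarrow> 'a set" where
  "cnbhd E S = nbhd E S \<union> S"

definition indep :: "('a \<Rightarrow> 'a \<Rightarrow> bool) \<Rightarrow> 'a set \<Rightarrow> bool" where
  "indep E S \<longleftrightarrow> (\<forall>x\<in>S. \<forall>y\<in>S. \<not> E x y)"

text \<open>alpha_w(G[S]): maximum weight of an independent set of the induced subgraph G[S]
  (S finite; equals 0 for S empty).\<close>
definition alpha_w :: "('a \<Rightarrow> 'a \<Rightarrow> bool) \<Rightarrow> ('a \<Rightarrow> real) \<Rightarrow> 'a set \<Rightarrow> real" where
  "alpha_w E w S = Max ((\<lambda>I. sum w I) ` {I. I \<subseteq> S \<and> indep E I})"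

definition is_MWIS :: "'a set \<Rightarrow> ('a \<Rightarrow> 'a \<Rightarrow> bool) \<Rightarrow> ('a \<Rightarrow> real) \<Rightarrow> 'a set \<Rightarrow> bool" where
  "is_MWIS V E w I \<longleftrightarrow> I \<subseteq> V \<and> indep E I \<and>
     (\<forall>J. J \<subseteq> V \<and> indep E J \<longrightarrow> sum w J \<le> sum w I)"

definition vertex_cover :: "'a set \<Rightarrow> ('a \<Rightarrow> 'a \<Rightarrow> bool) \<Rightarrow> 'a set \<Rightarrow> bool" where
  "vertex_cover V E C \<longleftrightarrow> C \<subseteq> V \<and> (\<forall>x y. E x y \<longrightarrow> x \<in> C \<or> y \<in> C)"

definition is_MWVC :: "'a set \<Rightarrow> ('a \<Rightarrow> 'a \<Rightarrow> bool) \<Rightarrow> ('a \<Rightarrow> real) \<Rightarrow> 'a set \<Rightarrow> bool" where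
  "is_MWVC V E w C \<longleftrightarrow> vertex_cover V E C \<and>
     (\<forall>D. vertex_cover V E D \<longrightarrow> sum w C \<le> sum w D)"

definition sheathed :: "'a set \<Rightarrow> ('a \<Rightarrow> 'a \<Rightarrow> bool) \<Rightarrow> ('a \<Rightarrow> real) \<Rightarrow> 'a \<Rightarrow> bool" where
  "sheathed V E w v \<longleftrightarrow> (\<exists>C. is_MWVC V E w C \<and> v \<in> C)"

definition simultaneous :: "'a set \<Rightarrow> ('a \<Rightarrow> 'a \<Rightarrow> bool) \<Rightarrow> ('a \<Rightarrow> real) \<Rightarrow> 'a set \<Rightarrow> bool" where
  "simultaneous V E w X \<longleftrightarrow>
     (\<exists>I. is_MWIS V E w I \<and> X \<subseteq> I) \<or> (\<exists>C. is_MWVC V E w C \<and> X \<subseteq> C)"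

definition child :: "('a \<Rightarrow> 'a \<Rightarrow> bool) \<Rightarrow> ('a \<Rightarrow> real) \<Rightarrow> 'a set \<Rightarrow> 'a \<Rightarrow> bool" where
  "child E w S u \<longleftrightarrow> u \<in> nbhd E S \<and> sum w (S \<inter> nbr E u) \<le> w u"

definition satellite_cand :: "('a \<Rightarrow> 'a \<Rightarrow> bool) \<Rightarrow> ('a \<Rightarrow> real) \<Rightarrow> 'a set \<Rightarrow> 'a \<Rightarrow> 'a set \<Rightarrow> bool" where
  "satellite_cand E w S u T \<longleftrightarrow> T \<subseteq> nbr E u - cnbhd E S \<and> indep E T \<and>
     w u < sum w (S \<inter> nbr E u) + sum w T"

definition extending_child :: "('a \<Rightarrow> 'a \<Rightarrow> bool) \<Rightarrow> ('a \<Rightarrow> real) \<Rightarrow> 'a set \<Rightarrow> 'a \<Rightarrow> bool" where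
  "extending_child E w S u \<longleftrightarrow> child E w S u \<and> (\<exists>!T. satellite_cand E w S u T)"

text \<open>States reachable by the confinement procedure from v via step (i),
  with an arbitrary choice of extending child at each step.\<close>
inductive conf_reach :: "('a \<Rightarrow> 'a \<Rightarrow> bool) \<Rightarrow> ('a \<Rightarrow> real) \<Rightarrow> 'a \<Rightarrow> 'a set \<Rightarrow> bool"
  for E w v where
  start: "conf_reach E w v {v}"
| step: "conf_reach E w v S \<Longrightarrow> extending_child E w S u \<Longrightarrow> satellite_cand E w S u T
          \<Longrightarrow> conf_reach E w v (S \<union> T)"

definition unconfining_child :: "('a \<Rightarrow> 'a \<Rightarrow> bool) \<Rightarrow> ('a \<Rightarrow> real) \<Rightarrow> 'a set \<Rightarrow> 'a \<Rightarrow> bool" where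
  "unconfining_child E w S u \<longleftrightarrow> child E w S u \<and>
     sum w (S \<inter> nbr E u) + alpha_w E w (nbr E u - cnbhd E S) \<le> w u"

definition halts_unconfined :: "('a \<Rightarrow> 'a \<Rightarrow> bool) \<Rightarrow> ('a \<Rightarrow> real) \<Rightarrow> 'a \<Rightarrow> 'a set \<Rightarrow> bool" where
  "halts_unconfined E w v S \<longleftrightarrow> conf_reach E w v S \<and> (\<forall>u. \<not> extending_child E w S u)
     \<and> (\<exists>u. unconfining_child E w S u)"

definition halts_confined :: "('a \<Rightarrow> 'a \<Rightarrow> bool) \<Rightarrow> ('a \<Rightarrow> real) \<Rightarrow> 'a \<Rightarrow> 'a set \<Rightarrow> bool" where
  "halts_confined E w v S \<longleftrightarrow> conf_reach E w v S \<and> (\<forall>u. \<not> extending_child E w S u)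
     \<and> \<not> (\<exists>u. unconfining_child E w S u)"

end

theory Submission
  imports Defs
begin

text \<open>
  Every state S reached by the confinement procedure from u has the following property: for
  every MWIS I containing u, either S \<subseteq> I, or exchanging the extending child x whose satellite
  set was missed for its neighbourhood in I gives another MWIS, which meets S in fewer vertices
  and differs from I only inside N(S). This works because by uniqueness of the satellite set,
  I \<inter> N(x) - N[S] is not a satellite candidate, i.e. it is too light to beat x. Iterating the
  exchange, every MWIS I can be turned into an MWIS J with J - I \<subseteq> N(S) that either contains S
  or avoids u. For an unconfined v the same exchange at the unconfining child shows that S
  cannot lie in every MWIS; both statements of (b) follow from the descent since S \<inter> N(S) = {}.
\<close>

lemma wgraphD:
  assumes "wgraph V E w"
  shows "finite V" and "E x y \<Longrightarrow> x \<in> V" and "E x y \<Longrightarrow> y \<in> V"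
    and "E x y \<Longrightarrow> E y x" and "\<not> E x x"
  using assms unfolding wgraph_def by blast+

lemma nbhd_disjoint: "S \<inter> nbhd E S = {}"
  unfolding nbhd_def by blast

lemma indep_subset: "indep E I \<Longrightarrow> J \<subseteq> I \<Longrightarrow> indep E J"
  unfolding indep_def by blast

lemma nbr_subset: "wgraph V E w \<Longrightarrow> nbr E x \<subseteq> V"
  unfolding nbr_def by (blast dest: wgraphD(3))

lemma is_MWVC_complement_MWIS:
  assumes g: "wgraph V E w" and I: "is_MWIS V E w I"
  shows "is_MWVC V E w (V - I)"
proof -
  have IV: "I \<subseteq> V" and ind: "indep E I"
    and max: "\<And>J. J \<subseteq> V \<Longrightarrow> indep E J \<Longrightarrow> sum w J \<le> sum w I"
    using I unfolding is_MWIS_def by auto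
  have fin: "finite V" using wgraphD(1)[OF g] .
  have cover: "vertex_cover V E (V - I)"
    using ind wgraphD(2,3)[OF g] unfolding vertex_cover_def indep_def by blast
  have "sum w (V - I) \<le> sum w D" if D: "vertex_cover V E D" for D
  proof -
    have DV: "D \<subseteq> V" using D unfolding vertex_cover_def by blast
    have "indep E (V - D)" using D unfolding vertex_cover_def indep_def by blast
    then have "sum w (V - D) \<le> sum w I" using max by blast
    then show ?thesis using DV IV fin by (simp add: sum_diff)
  qed
  then show ?thesis using cover unfolding is_MWVC_def by blast
qed

lemma sheathed_if_MWIS_avoids:
  assumes "wgraph V E w" and "is_MWIS V E w I" and "v \<notin> I" and "v \<in> V"
  shows "sheathed V E w v"
  using is_MWVC_complement_MWIS[OF assms(1,2)] assms(3,4) unfolding sheathed_def by blast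

lemma alpha_w_ge:
  assumes "finite X" and "T \<subseteq> X" and "indep E T"
  shows "sum w T \<le> alpha_w E w X"
  unfolding alpha_w_def using assms by (intro Max_ge) auto

lemma alpha_w_attained:
  assumes "finite X"
  obtains I where "I \<subseteq> X" and "indep E I" and "sum w I = alpha_w E w X"
proof -
  have "{} \<in> {I. I \<subseteq> X \<and> indep E I}" unfolding indep_def by simp
  then have "alpha_w E w X \<in> sum w ` {I. I \<subseteq> X \<and> indep E I}"
    unfolding alpha_w_def using assms by (intro Max_in) auto
  then obtain I where "I \<subseteq> X" "indep E I" "alpha_w E w X = sum w I" by blast
  then show ?thesis using that by simp
qed

lemma ex_MWIS:
  assumes "wgraph V E w"
  obtains I where "is_MWIS V E w I"
proof -
  have fin: "finite V" using wgraphD(1)[OF assms] .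
  obtain I where "I \<subseteq> V" and "indep E I" and "sum w I = alpha_w E w V"
    using alpha_w_attained[OF fin] .
  then have "is_MWIS V E w I"
    unfolding is_MWIS_def using alpha_w_ge[OF fin] by auto
  then show ?thesis using that by blast
qed

lemma alpha_w_eq_MWIS:
  assumes g: "wgraph V E w" and I: "is_MWIS V E w I" and X: "I \<subseteq> X" "X \<subseteq> V"
  shows "alpha_w E w X = sum w I"
proof -
  have fin: "finite X" using X wgraphD(1)[OF g] finite_subset by blast
  obtain J where "J \<subseteq> X" "indep E J" "sum w J = alpha_w E w X"
    using alpha_w_attained[OF fin] .
  then have "alpha_w E w X \<le> sum w I" using I X unfolding is_MWIS_def by force
  moreover have "sum w I \<le> alpha_w E w X"
    using I X fin unfolding is_MWIS_def by (auto intro: alpha_w_ge)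
  ultimately show ?thesis by linarith
qed

lemma alpha_w_remove_eq_if_MWIS_avoids:
  assumes g: "wgraph V E w" and I: "is_MWIS V E w I" and vI: "v \<notin> I"
  shows "alpha_w E w (V - {v}) = alpha_w E w V"
proof -
  have "I \<subseteq> V" using I unfolding is_MWIS_def by blast
  then show ?thesis
    using alpha_w_eq_MWIS[OF g I, of V] alpha_w_eq_MWIS[OF g I, of "V - {v}"] vI
    by (simp add: subset_Diff_insert)
qed

lemma MWIS_exchange:
  assumes g: "wgraph V E w" and I: "is_MWIS V E w I"
    and x: "x \<in> V" "x \<notin> I" and heavy: "sum w (I \<inter> nbr E x) \<le> w x"
  shows "is_MWIS V E w (insert x (I - nbr E x))"
proof -
  have IV: "I \<subseteq> V" and ind: "indep E I"
    and max: "\<And>J. J \<subseteq> V \<Longrightarrow> indep E J \<Longrightarrow> sum w J \<le> sum w I"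
    using I unfolding is_MWIS_def by auto
  have finI: "finite I" using IV wgraphD(1)[OF g] finite_subset by blast
  have "indep E (insert x (I - nbr E x))"
    using ind wgraphD(4,5)[OF g] unfolding indep_def nbr_def by blast
  moreover have "sum w I \<le> sum w (insert x (I - nbr E x))"
  proof -
    have "sum w I = sum w (I - nbr E x) + sum w (I \<inter> nbr E x)"
      using sum.subset_diff[of "I \<inter> nbr E x" I w] finI by (simp add: Diff_Int)
    then show ?thesis using heavy finI x(2) by simp
  qed
  moreover have "insert x (I - nbr E x) \<subseteq> V" using IV x(1) by blast
  ultimately show ?thesis using max unfolding is_MWIS_def by (meson order_trans)
qed

lemma sum_nbr_split:
  assumes fin: "finite I" and ind: "indep E I" and SI: "S \<subseteq> I"
  shows "sum w (I \<inter> nbr E x) = sum w (S \<inter> nbr E x) + sum w (I \<inter> nbr E x - cnbhd E S)"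
proof -
  have "I \<inter> nbhd E S = {}"
    using ind SI unfolding indep_def nbhd_def nbr_def by blast
  then have "I \<inter> nbr E x = (S \<inter> nbr E x) \<union> (I \<inter> nbr E x - cnbhd E S)"
    using SI unfolding cnbhd_def by blast
  also have "sum w \<dots> = sum w (S \<inter> nbr E x) + sum w (I \<inter> nbr E x - cnbhd E S)"
    using fin SI by (intro sum.union_disjoint) (auto simp: cnbhd_def intro: finite_subset)
  finally show ?thesis .
qed

lemma MWIS_exchange_at_child:
  assumes g: "wgraph V E w" and I: "is_MWIS V E w I" and SI: "S \<subseteq> I"
    and x: "x \<in> nbhd E S"
    and heavy: "sum w (S \<inter> nbr E x) + sum w (I \<inter> nbr E x - cnbhd E S) \<le> w x"
  shows "is_MWIS V E w (insert x (I - nbr E x))"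
proof (rule MWIS_exchange[OF g I])
  have IV: "I \<subseteq> V" and ind: "indep E I" using I unfolding is_MWIS_def by auto
  obtain s where "s \<in> S" and "E s x" using x unfolding nbhd_def nbr_def by blast
  then show "x \<in> V" and "x \<notin> I"
    using wgraphD(3)[OF g] SI ind unfolding indep_def by blast+
  show "sum w (I \<inter> nbr E x) \<le> w x"
    using heavy sum_nbr_split[OF _ ind SI] IV wgraphD(1)[OF g] finite_subset by metis
qed

lemma conf_reach_subset:
  assumes g: "wgraph V E w" and u: "u \<in> V"
  shows "conf_reach E w u S \<Longrightarrow> S \<subseteq> V"
proof (induction rule: conf_reach.induct)
  case start
  then show ?case using u by simp
next
  case (step S x T)
  then show ?case using nbr_subset[OF g] unfolding satellite_cand_def by blast
qed

lemma conf_reach_MWIS_contains_or_shrinks: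
  assumes g: "wgraph V E w"
  shows "conf_reach E w u S \<Longrightarrow> is_MWIS V E w I \<Longrightarrow> u \<in> I \<Longrightarrow>
    S \<subseteq> I \<or> (\<exists>I'. is_MWIS V E w I' \<and> I' - I \<subseteq> nbhd E S \<and> I' \<inter> S \<subset> I \<inter> S)"
proof (induction rule: conf_reach.induct)
  case start
  then show ?case by simp
next
  case (step S x T)
  have T: "T \<subseteq> nbr E x - cnbhd E S"
    using step.hyps(3) unfolding satellite_cand_def by blast
  have x: "x \<in> nbhd E S" and unique: "\<exists>!T. satellite_cand E w S x T"
    using step.hyps(2) unfolding extending_child_def child_def by auto
  have xT: "x \<notin> T" using T wgraphD(5)[OF g] unfolding nbr_def by blast
  have nbhd_mono: "nbhd E S \<subseteq> nbhd E (S \<union> T)"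
    using T unfolding nbhd_def cnbhd_def by blast
  from step.IH[OF step.prems] show ?case
  proof
    assume SI: "S \<subseteq> I"
    show ?thesis
    proof (cases "T \<subseteq> I")
      case True
      then show ?thesis using SI by blast
    next
      case False
      define I' where "I' = insert x (I - nbr E x)"
      have "indep E I" using step.prems unfolding is_MWIS_def by blast
      then have "\<not> satellite_cand E w S x (I \<inter> nbr E x - cnbhd E S)"
        using unique step.hyps(3) False by blast
      moreover have "indep E (I \<inter> nbr E x - cnbhd E S)"
        using \<open>indep E I\<close> by (rule indep_subset) blast
      ultimately have "sum w (S \<inter> nbr E x) + sum w (I \<inter> nbr E x - cnbhd E S) \<le> w x"
        unfolding satellite_cand_def by auto
      then have "is_MWIS V E w I'"
        unfolding I'_def using MWIS_exchange_at_child[OF g step.prems(1) SI x] by blast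
      moreover have "I' - I \<subseteq> nbhd E (S \<union> T)"
        unfolding I'_def using x nbhd_mono by blast
      moreover have "I' \<inter> (S \<union> T) \<subset> I \<inter> (S \<union> T)"
      proof -
        obtain s where "s \<in> S" and "s \<in> nbr E x"
          using x wgraphD(4)[OF g] unfolding nbhd_def nbr_def by blast
        moreover have "x \<notin> S" using x unfolding nbhd_def by blast
        ultimately have "s \<in> I \<inter> (S \<union> T) - I'" and "I' \<inter> (S \<union> T) \<subseteq> I \<inter> (S \<union> T)"
          unfolding I'_def using xT SI by auto
        then show ?thesis by blast
      qed
      ultimately show ?thesis by blast
    qed
  next
    assume "\<exists>I'. is_MWIS V E w I' \<and> I' - I \<subseteq> nbhd E S \<and> I' \<inter> S \<subset> I \<inter> S"
    moreover have "T \<inter> nbhd E S = {}" using T unfolding cnbhd_def by blast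
    ultimately show ?thesis using nbhd_mono by blast
  qed
qed

lemma conf_reach_MWIS_descent:
  assumes g: "wgraph V E w" and r: "conf_reach E w u S" and I: "is_MWIS V E w I"
  shows "\<exists>J. is_MWIS V E w J \<and> J - I \<subseteq> nbhd E S \<and> (S \<subseteq> J \<or> u \<notin> J)"
  using I
proof (induction "card (I \<inter> S)" arbitrary: I rule: less_induct)
  case less
  show ?case
  proof (cases "u \<in> I \<and> \<not> S \<subseteq> I")
    case True
    then obtain I' where I': "is_MWIS V E w I'" "I' - I \<subseteq> nbhd E S" "I' \<inter> S \<subset> I \<inter> S"
      using conf_reach_MWIS_contains_or_shrinks[OF g r less.prems] by blast
    have "finite (I \<inter> S)"
      using less.prems wgraphD(1)[OF g] finite_subset unfolding is_MWIS_def by blast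
    then have "card (I' \<inter> S) < card (I \<inter> S)" using I'(3) by (rule psubset_card_mono)
    then obtain J where "is_MWIS V E w J" "J - I' \<subseteq> nbhd E S" "S \<subseteq> J \<or> u \<notin> J"
      using less.hyps I'(1) by blast
    then show ?thesis using I'(2) by blast
  qed (use less.prems in blast)
qed

lemma conf_reach_in_every_MWIS:
  assumes g: "wgraph V E w" and r: "conf_reach E w v S"
    and every: "\<And>I. is_MWIS V E w I \<Longrightarrow> v \<in> I" and I: "is_MWIS V E w I"
  shows "S \<subseteq> I"
  using conf_reach_MWIS_descent[OF g r I] every nbhd_disjoint[of S E] by blast

lemma conf_reach_MWIS_avoids_pair:
  assumes g: "wgraph V E w" and r: "conf_reach E w u S" and vS: "v \<in> S"
    and I: "is_MWIS V E w I" and vI: "v \<notin> I"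
  shows "\<exists>J. is_MWIS V E w J \<and> u \<notin> J \<and> v \<notin> J"
  using conf_reach_MWIS_descent[OF g r I] vS vI nbhd_disjoint[of S E] by blast

lemma unconfined_MWIS_avoids:
  assumes g: "wgraph V E w" and h: "halts_unconfined E w v S"
  shows "\<exists>I. is_MWIS V E w I \<and> v \<notin> I"
proof (rule ccontr)
  assume "\<nexists>I. is_MWIS V E w I \<and> v \<notin> I"
  moreover have r: "conf_reach E w v S" using h unfolding halts_unconfined_def by blast
  ultimately have every: "\<And>I. is_MWIS V E w I \<Longrightarrow> S \<subseteq> I"
    using conf_reach_in_every_MWIS[OF g r] by blast
  obtain x where x: "x \<in> nbhd E S"
    and heavy: "sum w (S \<inter> nbr E x) + alpha_w E w (nbr E x - cnbhd E S) \<le> w x"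
    using h unfolding halts_unconfined_def unconfining_child_def child_def by blast
  obtain I where I: "is_MWIS V E w I" using ex_MWIS[OF g] .
  have "finite (nbr E x - cnbhd E S)"
    using finite_subset[OF nbr_subset[OF g] wgraphD(1)[OF g]] by blast
  moreover have "indep E (I \<inter> nbr E x - cnbhd E S)"
    using I unfolding is_MWIS_def by (blast intro: indep_subset)
  ultimately have "sum w (I \<inter> nbr E x - cnbhd E S) \<le> alpha_w E w (nbr E x - cnbhd E S)"
    by (intro alpha_w_ge) auto
  then have "is_MWIS V E w (insert x (I - nbr E x))"
    using MWIS_exchange_at_child[OF g I every[OF I] x] heavy by linarith
  then have "S \<subseteq> insert x (I - nbr E x)" by (rule every)
  moreover obtain s where "s \<in> S" and "s \<in> nbr E x"
    using x wgraphD(4)[OF g] unfolding nbhd_def nbr_def by blast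
  moreover have "x \<notin> S" using x unfolding nbhd_def by blast
  ultimately show False by blast
qed

theorem corollary3p3:
  fixes V :: "'a set" and E :: "'a \<Rightarrow> 'a \<Rightarrow> bool" and w :: "'a \<Rightarrow> real" and v :: 'a
  assumes "wgraph V E w" and "v \<in> V"
  shows "(\<forall>S. halts_unconfined E w v S \<longrightarrow>
            sheathed V E w v \<and> (\<exists>I. is_MWIS V E w I \<and> v \<notin> I) \<and>
            alpha_w E w (V - {v}) = alpha_w E w V)
       \<and> (\<forall>Sv. halts_confined E w v Sv \<longrightarrow>
            (sheathed V E w v \<or> (\<forall>I. is_MWIS V E w I \<longrightarrow> Sv \<subseteq> I)) \<and>
            (\<forall>u Su. u \<in> Sv \<and> halts_confined E w u Su \<and> v \<in> Su \<longrightarrow>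
               simultaneous V E w {u, v}))"
proof (intro conjI allI impI)
  note g = assms(1)
  fix S assume "halts_unconfined E w v S"
  then obtain I where I: "is_MWIS V E w I" "v \<notin> I"
    using unconfined_MWIS_avoids[OF g] by blast
  then show "sheathed V E w v" and "\<exists>I. is_MWIS V E w I \<and> v \<notin> I"
      and "alpha_w E w (V - {v}) = alpha_w E w V"
    using sheathed_if_MWIS_avoids[OF g I assms(2)] alpha_w_remove_eq_if_MWIS_avoids[OF g I]
    by blast+
next
  note g = assms(1)
  fix Sv assume "halts_confined E w v Sv"
  then have r: "conf_reach E w v Sv" unfolding halts_confined_def by blast
  show "sheathed V E w v \<or> (\<forall>I. is_MWIS V E w I \<longrightarrow> Sv \<subseteq> I)"
    using sheathed_if_MWIS_avoids[OF g _ _ assms(2)] conf_reach_in_every_MWIS[OF g r] by blast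
  fix u Su assume hu: "u \<in> Sv \<and> halts_confined E w u Su \<and> v \<in> Su"
  then have ru: "conf_reach E w u Su" unfolding halts_confined_def by blast
  show "simultaneous V E w {u, v}"
  proof (cases "\<exists>I. is_MWIS V E w I \<and> v \<notin> I")
    case True
    then obtain J where J: "is_MWIS V E w J" "u \<notin> J" "v \<notin> J"
      using conf_reach_MWIS_avoids_pair[OF g ru] hu by blast
    moreover have "u \<in> V" using conf_reach_subset[OF g assms(2) r] hu by blast
    ultimately show ?thesis
      using is_MWVC_complement_MWIS[OF g J(1)] assms(2) unfolding simultaneous_def by blast
  next
    case False
    obtain I where I: "is_MWIS V E w I" using ex_MWIS[OF g] .
    then have "Sv \<subseteq> I" using conf_reach_in_every_MWIS[OF g r] False by blast
    then show ?thesis using I False hu unfolding simultaneous_def by blast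
  qed
qed

end
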